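(* Let $\tau_1,\tau_2:[0,1]\to[0,1]$ be piecewise $C^1$ maps with $\tau_1\le\tau_2$ on $[0,1]$, and suppose that $\tau_1$ and $\tau_2$ possess absolutely continuous invariant probability measures with densities $f_1$ and $f_2$, respectively. Let $0<\lambda<1$ and $f=\lambda f_1+(1-\lambda)f_2$. Let $\boldsymbol\tau$ be a selector (a piecewise $C^1$ map $\boldsymbol\tau:[0,1]\to[0,1]$ with $\tau_1\le\boldsymbol\tau\le\tau_2$) that preserves the density $f$. Then there exists a measurable function $p:[0,1]\to[0,1]$ such that the position dependent random map $R=\{\tau_1,\tau_2;p,1-p\}$ also preserves $f$.
   Context: A position dependent random map $R=\{\tau_1,\tau_2;p,1-p\}$, where $p:[0,1]\to[0,1]$ is measurable, moves a point $x$ to $\tau_1(x)$ with probability $p(x)$ and to $\tau_2(x)$ with probability $1-p(x)$. A density $f$ is invariant (preserved) for $R$ if $P_{\tau_1}(pf)+P_{\tau_2}((1-p)f)=f$ a.e., where $P_{\tau_k}$ is the Frobenius–Perron operator of $\tau_k$ with respect to Lebesgue measure. *)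

theory Defs
  imports "HOL-Analysis.Analysis"
begin

definition piecewise_C1 :: "(real \<Rightarrow> real) \<Rightarrow> bool" where
  "piecewise_C1 \<tau> \<longleftrightarrow>
     (\<exists>S. finite S \<and> S \<subseteq> {0..1} \<and> 0 \<in> S \<and> 1 \<in> S \<and>
        (\<forall>a\<in>S. \<forall>b\<in>S. a < b \<and> {a<..<b} \<inter> S = {} \<longrightarrow>
           (\<exists>g g'. (\<forall>x\<in>{a..b}. (g has_real_derivative g' x) (at x within {a..b})) \<and>
                   continuous_on {a..b} g' \<and>
                   (\<forall>x\<in>{a<..<b}. \<tau> x = g x))))"

definition maps_unit :: "(real \<Rightarrow> real) \<Rightarrow> bool" where
  "maps_unit \<tau> \<longleftrightarrow> \<tau> ` {0..1} \<subseteq> {0..1}"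

definition is_density :: "(real \<Rightarrow> real) \<Rightarrow> bool" where
  "is_density f \<longleftrightarrow> f \<in> borel_measurable borel \<and> (\<forall>x\<in>{0..1}. 0 \<le> f x) \<and>
     set_integrable lborel {0..1} f \<and> (LINT x:{0..1}|lborel. f x) = 1"

definition acim_density :: "(real \<Rightarrow> real) \<Rightarrow> (real \<Rightarrow> real) \<Rightarrow> bool" where
  "acim_density \<tau> f \<longleftrightarrow> is_density f \<and>
     (\<forall>A \<in> sets borel. A \<subseteq> {0..1} \<longrightarrow>
        (LINT x:(\<tau> -` A \<inter> {0..1})|lborel. f x) = (LINT x:A|lborel. f x))"

text \<open>h is (a version of) the Frobenius--Perron image P_tau g of g, i.e.
  h is integrable on [0,1] and its integral over any Borel A in [0,1] equals the
  integral of g over the preimage of A.\<close>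
definition FP_image :: "(real \<Rightarrow> real) \<Rightarrow> (real \<Rightarrow> real) \<Rightarrow> (real \<Rightarrow> real) \<Rightarrow> bool" where
  "FP_image \<tau> g h \<longleftrightarrow> h \<in> borel_measurable borel \<and> set_integrable lborel {0..1} h \<and>
     (\<forall>A \<in> sets borel. A \<subseteq> {0..1} \<longrightarrow>
        (LINT x:A|lborel. h x) = (LINT x:(\<tau> -` A \<inter> {0..1})|lborel. g x))"

definition preserves_density :: "(real \<Rightarrow> real) \<Rightarrow> (real \<Rightarrow> real) \<Rightarrow> bool" where
  "preserves_density \<tau> f \<longleftrightarrow>
     (\<exists>h. FP_image \<tau> f h \<and> (AE x in lborel. x \<in> {0..1} \<longrightarrow> h x = f x))"

definition random_map_preserves ::
  "(real \<Rightarrow> real) \<Rightarrow> (real \<Rightarrow> real) \<Rightarrow> (real \<Rightarrow> real) \<Rightarrow> (real \<Rightarrow> real) \<Rightarrow> bool" where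
  "random_map_preserves \<tau>1 \<tau>2 p f \<longleftrightarrow>
     (\<exists>h1 h2. FP_image \<tau>1 (\<lambda>x. p x * f x) h1 \<and> FP_image \<tau>2 (\<lambda>x. (1 - p x) * f x) h2 \<and>
        (AE x in lborel. x \<in> {0..1} \<longrightarrow> h1 x + h2 x = f x))"

end

theory Submission
  imports Defs
begin

text \<open>Since \<open>f = \<lambda> f\<^sub>1 + (1 - \<lambda>) f\<^sub>2\<close> with both summands nonnegative, choose
  \<open>p = \<lambda> f\<^sub>1 / f\<close> (and \<open>p = 0\<close> where \<open>f = 0\<close>). Then \<open>p f = \<lambda> f\<^sub>1\<close> and
  \<open>(1 - p) f = (1 - \<lambda>) f\<^sub>2\<close>, and invariance of \<open>f\<^sub>i\<close> under \<open>\<tau>\<^sub>i\<close> gives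
  \<open>P\<^sub>\<tau>\<^sub>1(p f) + P\<^sub>\<tau>\<^sub>2((1 - p) f) = \<lambda> f\<^sub>1 + (1 - \<lambda>) f\<^sub>2 = f\<close>.\<close>

definition mixture_weight :: "real \<Rightarrow> real \<Rightarrow> real" where
  "mixture_weight a b = (if a + b = 0 then 0 else a / (a + b))"

lemma mixture_weight_measurable [measurable]:
  assumes "f \<in> borel_measurable M" "g \<in> borel_measurable M"
  shows "(\<lambda>x. mixture_weight (f x) (g x)) \<in> borel_measurable M"
  unfolding mixture_weight_def using assms by measurable

lemma mixture_weight_bounds:
  assumes "0 \<le> a" "0 \<le> b"
  shows "0 \<le> mixture_weight a b" "mixture_weight a b \<le> 1"
  using assms by (auto simp: mixture_weight_def field_simps)

lemma mixture_weight_mult: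
  assumes "0 \<le> a" "0 \<le> b"
  shows "mixture_weight a b * (a + b) = a"
  using assms by (auto simp: mixture_weight_def)

lemma one_minus_mixture_weight_mult:
  assumes "0 \<le> a" "0 \<le> b"
  shows "(1 - mixture_weight a b) * (a + b) = b"
  using mixture_weight_mult[OF assms] by (simp add: algebra_simps)

text \<open>No measurability of \<open>S\<close> is required; this matters because the maps are not
  assumed measurable, so preimages need not be Borel sets.\<close>
lemma set_integral_cong_superset:
  assumes "S \<subseteq> T" "\<And>x. x \<in> T \<Longrightarrow> f x = g x"
  shows "(LINT x:S|M. f x) = (LINT x:S|M. g x)"
proof -
  have "(\<lambda>x. indicator S x *\<^sub>R f x) = (\<lambda>x. indicator S x *\<^sub>R g x)"
    using assms by (intro ext) (auto simp: indicator_def)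
  then show ?thesis unfolding set_lebesgue_integral_def by simp
qed

lemma acim_density_measurable_nonneg:
  assumes "acim_density \<tau> g"
  shows "g \<in> borel_measurable borel" "\<And>x. x \<in> {0..1} \<Longrightarrow> 0 \<le> g x"
  using assms unfolding acim_density_def is_density_def by auto

lemma FP_image_scaled_acim_density:
  assumes "acim_density \<tau> g" "\<And>x. x \<in> {0..1} \<Longrightarrow> q x = c * g x"
  shows "FP_image \<tau> q (\<lambda>x. c * g x)"
  unfolding FP_image_def
proof (intro conjI ballI impI)
  have dens: "is_density g" and inv: "\<And>A. A \<in> sets borel \<Longrightarrow> A \<subseteq> {0..1} \<Longrightarrow>
      (LINT x:(\<tau> -` A \<inter> {0..1})|lborel. g x) = (LINT x:A|lborel. g x)"
    using assms(1) unfolding acim_density_def by auto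
  then show "(\<lambda>x. c * g x) \<in> borel_measurable borel"
    and "set_integrable lborel {0..1} (\<lambda>x. c * g x)"
    unfolding is_density_def by auto
  fix A :: "real set"
  assume A: "A \<in> sets borel" "A \<subseteq> {0..1}"
  have "(LINT x:(\<tau> -` A \<inter> {0..1})|lborel. q x) = (LINT x:(\<tau> -` A \<inter> {0..1})|lborel. c * g x)"
    by (rule set_integral_cong_superset[of _ "{0..1}"]) (use assms(2) in auto)
  also have "\<dots> = c * (LINT x:A|lborel. g x)"
    using inv[OF A] by simp
  finally show "(LINT x:A|lborel. c * g x) = (LINT x:(\<tau> -` A \<inter> {0..1})|lborel. q x)"
    by simp
qed

lemma random_map_preserves_mixture:
  assumes "acim_density \<tau>1 f1" "acim_density \<tau>2 f2" "0 \<le> lam" "lam \<le> 1"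
  defines "p \<equiv> \<lambda>x. mixture_weight (lam * f1 x) ((1 - lam) * f2 x)"
  shows "random_map_preserves \<tau>1 \<tau>2 p (\<lambda>x. lam * f1 x + (1 - lam) * f2 x)"
  unfolding random_map_preserves_def
proof (intro exI conjI)
  have nonneg: "0 \<le> lam * f1 x" "0 \<le> (1 - lam) * f2 x" if "x \<in> {0..1}" for x
    using acim_density_measurable_nonneg(2)[OF assms(1) that]
      acim_density_measurable_nonneg(2)[OF assms(2) that] assms(3,4) by auto
  show "FP_image \<tau>1 (\<lambda>x. p x * (lam * f1 x + (1 - lam) * f2 x)) (\<lambda>x. lam * f1 x)"
    using assms(1) by (rule FP_image_scaled_acim_density)
      (simp add: p_def mixture_weight_mult nonneg)
  show "FP_image \<tau>2 (\<lambda>x. (1 - p x) * (lam * f1 x + (1 - lam) * f2 x)) (\<lambda>x. (1 - lam) * f2 x)"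
    using assms(2) by (rule FP_image_scaled_acim_density)
      (simp add: p_def one_minus_mixture_weight_mult nonneg)
qed simp

theorem corollary1:
  fixes \<tau>1 \<tau>2 \<tau> f1 f2 :: "real \<Rightarrow> real" and lam :: real
  assumes "piecewise_C1 \<tau>1" "piecewise_C1 \<tau>2"
    and "maps_unit \<tau>1" "maps_unit \<tau>2"
    and "\<forall>x\<in>{0..1}. \<tau>1 x \<le> \<tau>2 x"
    and "acim_density \<tau>1 f1" "acim_density \<tau>2 f2"
    and "0 < lam" "lam < 1"
    and "piecewise_C1 \<tau>" "maps_unit \<tau>"
    and "\<forall>x\<in>{0..1}. \<tau>1 x \<le> \<tau> x \<and> \<tau> x \<le> \<tau>2 x"
    and "preserves_density \<tau> (\<lambda>x. lam * f1 x + (1 - lam) * f2 x)"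
  shows "\<exists>p :: real \<Rightarrow> real. p \<in> borel_measurable borel \<and> (\<forall>x\<in>{0..1}. 0 \<le> p x \<and> p x \<le> 1) \<and>
           random_map_preserves \<tau>1 \<tau>2 p (\<lambda>x. lam * f1 x + (1 - lam) * f2 x)"
proof -
  let ?p = "\<lambda>x. mixture_weight (lam * f1 x) ((1 - lam) * f2 x)"
  note f1 = acim_density_measurable_nonneg[OF assms(6)]
  note f2 = acim_density_measurable_nonneg[OF assms(7)]
  have "?p \<in> borel_measurable borel"
    using f1(1) f2(1) by measurable
  moreover have "0 \<le> ?p x \<and> ?p x \<le> 1" if "x \<in> {0..1}" for x
  proof -
    have "0 \<le> lam * f1 x" "0 \<le> (1 - lam) * f2 x"
      using f1(2) f2(2) that assms(8,9) by auto
    then show ?thesis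
      using mixture_weight_bounds by blast
  qed
  moreover have "random_map_preserves \<tau>1 \<tau>2 ?p (\<lambda>x. lam * f1 x + (1 - lam) * f2 x)"
    using assms(6,7,8,9) by (intro random_map_preserves_mixture) auto
  ultimately show ?thesis
    by blast
qed

end
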